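(* Let $F$ be a forest with at least one vertex. Then $F$ is a tree (i.e. connected) if and only if its chromatic symmetric function $X_F$ is irreducible in the ring $\Lambda$ of symmetric functions (over $\mathbb{C}$).
   Context: For a graph $G=(V,E)$ with $V=\{v_1,\dots,v_n\}$, a proper coloring is a map $\kappa:V\to\mathbb{N}$ with $\kappa(u)\ne\kappa(v)$ whenever $(u,v)\in E$. The chromatic symmetric function is $X_G=\sum_\kappa x_{\kappa(v_1)}\cdots x_{\kappa(v_n)}$, summed over proper colorings. $\Lambda$ is the ring of symmetric functions, which is the polynomial ring $\mathbb{C}[p_1,p_2,\dots]$ in the power sums $p_m=\sum_i x_i^m$. Irreducible means non-constant, non-unit, and not a product of two non-constant elements. *)

theory Defs
  imports Complex_Main "HOL-Library.FuncSet"
begin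

definition simple_graph :: "'a set \<Rightarrow> ('a \<Rightarrow> 'a \<Rightarrow> bool) \<Rightarrow> bool" where
  "simple_graph V E \<longleftrightarrow> finite V \<and> (\<forall>u v. E u v \<longrightarrow> u \<in> V \<and> v \<in> V)
     \<and> (\<forall>u v. E u v \<longrightarrow> E v u) \<and> (\<forall>v. \<not> E v v)"

definition is_cycle :: "'a set \<Rightarrow> ('a \<Rightarrow> 'a \<Rightarrow> bool) \<Rightarrow> 'a list \<Rightarrow> bool" where
  "is_cycle V E cs \<longleftrightarrow> length cs \<ge> 3 \<and> distinct cs \<and> set cs \<subseteq> V
     \<and> (\<forall>i. Suc i < length cs \<longrightarrow> E (cs ! i) (cs ! Suc i))
     \<and> E (last cs) (hd cs)"

definition forest :: "'a set \<Rightarrow> ('a \<Rightarrow> 'a \<Rightarrow> bool) \<Rightarrow> bool" where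
  "forest V E \<longleftrightarrow> simple_graph V E \<and> (\<nexists>cs. is_cycle V E cs)"

definition connected_graph :: "'a set \<Rightarrow> ('a \<Rightarrow> 'a \<Rightarrow> bool) \<Rightarrow> bool" where
  "connected_graph V E \<longleftrightarrow> (\<forall>u\<in>V. \<forall>v\<in>V. E\<^sup>*\<^sup>* u v)"

definition tree :: "'a set \<Rightarrow> ('a \<Rightarrow> 'a \<Rightarrow> bool) \<Rightarrow> bool" where
  "tree V E \<longleftrightarrow> forest V E \<and> connected_graph V E"

text \<open>A monomial is an exponent vector \<open>m :: nat \<Rightarrow> nat\<close> (finitely supported);
  a formal series is its coefficient function \<open>monomial \<Rightarrow> complex\<close>.\<close>
type_synonym monom = "nat \<Rightarrow> nat"
type_synonym series = "monom \<Rightarrow> complex"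

definition fin_supp :: "monom \<Rightarrow> bool" where
  "fin_supp m \<longleftrightarrow> finite {i. m i \<noteq> 0}"

definition mdeg :: "monom \<Rightarrow> nat" where
  "mdeg m = (\<Sum>i\<in>{i. m i \<noteq> 0}. m i)"

definition series_mult :: "series \<Rightarrow> series \<Rightarrow> series" where
  "series_mult f g = (\<lambda>m. \<Sum>a\<in>{a. \<forall>i. a i \<le> m i}. f a * g (\<lambda>i. m i - a i))"

definition series_one :: series where
  "series_one = (\<lambda>m. if m = (\<lambda>_. 0) then 1 else 0)"

definition series_const :: "series \<Rightarrow> bool" where
  "series_const f \<longleftrightarrow> (\<forall>m. m \<noteq> (\<lambda>_. 0) \<longrightarrow> f m = 0)"

text \<open>The ring \<open>\<Lambda>\<close> of symmetric functions over \<open>\<complex>\<close>: symmetric formal series of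
  bounded degree supported on (finitely supported) monomials.\<close>
definition sym_fun :: "series \<Rightarrow> bool" where
  "sym_fun f \<longleftrightarrow> (\<forall>m. \<not> fin_supp m \<longrightarrow> f m = 0)
     \<and> (\<exists>d. \<forall>m. f m \<noteq> 0 \<longrightarrow> mdeg m \<le> d)
     \<and> (\<forall>\<sigma> m. bij \<sigma> \<longrightarrow> f (m \<circ> \<sigma>) = f m)"

definition irreducible_Lambda :: "series \<Rightarrow> bool" where
  "irreducible_Lambda f \<longleftrightarrow> sym_fun f \<and> \<not> series_const f
     \<and> \<not> (\<exists>g. sym_fun g \<and> series_mult f g = series_one)
     \<and> \<not> (\<exists>g h. sym_fun g \<and> sym_fun h \<and> \<not> series_const g \<and> \<not> series_const h
              \<and> f = series_mult g h)"

definition proper_coloring :: "'a set \<Rightarrow> ('a \<Rightarrow> 'a \<Rightarrow> bool) \<Rightarrow> ('a \<Rightarrow> nat) \<Rightarrow> bool" where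
  "proper_coloring V E \<kappa> \<longleftrightarrow> (\<forall>u\<in>V. \<forall>v\<in>V. E u v \<longrightarrow> \<kappa> u \<noteq> \<kappa> v)"

definition chromatic_symfun :: "'a set \<Rightarrow> ('a \<Rightarrow> 'a \<Rightarrow> bool) \<Rightarrow> series" where
  "chromatic_symfun V E = (\<lambda>m. of_nat (card {\<kappa> \<in> V \<rightarrow>\<^sub>E (UNIV :: nat set).
       proper_coloring V E \<kappa> \<and> (\<forall>i. m i = card {v\<in>V. \<kappa> v = i})}))"

end

theory Submission
  imports Defs "HOL-Computational_Algebra.Polynomial"
begin

text \<open>If the forest is disconnected, \<open>X\<close> factors as the product of the chromatic symmetric
  functions of two vertex-disjoint parts with no edges between them, both non-constant.
  Conversely, let \<open>T\<close> be a tree on \<open>n\<close> vertices and suppose \<open>X\<^sub>T = g h\<close> with \<open>g\<close>, \<open>h\<close>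
  non-constant and symmetric. As \<open>X\<^sub>T\<close> is homogeneous of degree \<open>n \<ge> 1\<close>, comparing lowest- and
  highest-degree terms shows that \<open>g\<close> and \<open>h\<close> have no constant term. The principal specialization
  \<open>x\<^sub>0 = \<dots> = x\<^sub>N\<^sub>-\<^sub>1 = 1\<close>, \<open>x\<^sub>i = 0\<close> otherwise, is multiplicative, sends \<open>X\<^sub>T\<close> to the chromatic
  polynomial \<open>N (N - 1)\<^sup>n\<^sup>-\<^sup>1\<close>, and sends a symmetric function without constant term to
  \<open>N r(N)\<close> for a polynomial \<open>r\<close>, since it is a combination of the binomials \<open>N choose j\<close> with
  \<open>j \<ge> 1\<close>. Hence \<open>x r\<^sub>g r\<^sub>h = (x - 1)\<^sup>n\<^sup>-\<^sup>1\<close> as polynomials, which fails at \<open>x = 0\<close>.\<close>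

definition box_monoms :: "nat \<Rightarrow> nat \<Rightarrow> monom set" where
  "box_monoms N D = {m. (\<forall>i. N \<le> i \<longrightarrow> m i = 0) \<and> (\<forall>i. m i \<le> D)}"

lemma finite_box_monoms: "finite (box_monoms N D)"
proof -
  have "box_monoms N D \<subseteq> (\<lambda>f i. if i < N then f i else 0) ` ({..<N} \<rightarrow>\<^sub>E {..D})"
  proof
    fix m assume m: "m \<in> box_monoms N D"
    then have "m = (\<lambda>i. if i < N then restrict m {..<N} i else 0)"
      by (auto simp: box_monoms_def fun_eq_iff)
    moreover have "restrict m {..<N} \<in> {..<N} \<rightarrow>\<^sub>E {..D}"
      using m by (auto simp: box_monoms_def)
    ultimately show "m \<in> (\<lambda>f i. if i < N then f i else 0) ` ({..<N} \<rightarrow>\<^sub>E {..D})" by blast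
  qed
  then show ?thesis by (rule finite_surj[rotated]) (simp add: finite_PiE)
qed

lemma fin_supp_iff_bounded: "fin_supp m \<longleftrightarrow> (\<exists>K. \<forall>i. K \<le> i \<longrightarrow> m i = 0)"
proof
  assume "fin_supp m"
  then obtain K where K: "\<forall>i\<in>{i. m i \<noteq> 0}. i < K"
    unfolding fin_supp_def finite_nat_set_iff_bounded by blast
  have "m i = 0" if "K \<le> i" for i
    using K that by (simp add: not_less[symmetric]) blast
  then show "\<exists>K. \<forall>i. K \<le> i \<longrightarrow> m i = 0" by blast
next
  assume "\<exists>K. \<forall>i. K \<le> i \<longrightarrow> m i = 0"
  then obtain K where K: "\<forall>i. K \<le> i \<longrightarrow> m i = 0" by blast
  have "{i. m i \<noteq> 0} \<subseteq> {..<K}"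
    using K by (auto simp: not_less[symmetric])
  then show "fin_supp m" unfolding fin_supp_def by (rule finite_subset) simp
qed

lemma mdeg_eq_sum: "{i. m i \<noteq> 0} \<subseteq> A \<Longrightarrow> finite A \<Longrightarrow> mdeg m = (\<Sum>i\<in>A. m i)"
  unfolding mdeg_def by (rule sum.mono_neutral_left) auto

lemma mdeg_eq_sum_lessThan: "\<forall>i. K \<le> i \<longrightarrow> m i = 0 \<Longrightarrow> mdeg m = (\<Sum>i<K. m i)"
  by (rule mdeg_eq_sum) (auto simp: not_less[symmetric])

lemma exponent_le_mdeg: "fin_supp m \<Longrightarrow> m i \<le> mdeg m"
proof -
  assume "fin_supp m"
  then obtain K where K: "\<forall>j. K \<le> j \<longrightarrow> m j = 0" by (auto simp: fin_supp_iff_bounded)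
  then have "mdeg m = (\<Sum>j<max K (Suc i). m j)" by (intro mdeg_eq_sum_lessThan) simp
  moreover have "m i \<le> (\<Sum>j<max K (Suc i). m j)" by (rule member_le_sum) auto
  ultimately show ?thesis by simp
qed

lemma mdeg_eq_0_iff: "fin_supp m \<Longrightarrow> mdeg m = 0 \<longleftrightarrow> m = (\<lambda>_. 0)"
proof -
  assume "fin_supp m"
  then have "mdeg m = 0 \<longleftrightarrow> (\<forall>i\<in>{i. m i \<noteq> 0}. m i = 0)"
    unfolding mdeg_def fin_supp_def by (rule sum_eq_0_iff)
  then show ?thesis by (auto simp: fun_eq_iff)
qed

lemma fin_supp_common_bound:
  assumes "fin_supp a" and "fin_supp b"
  obtains K where "\<forall>i. K \<le> i \<longrightarrow> a i = 0" and "\<forall>i. K \<le> i \<longrightarrow> b i = 0"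
proof -
  obtain Ka Kb where "\<forall>i. Ka \<le> i \<longrightarrow> a i = 0" and "\<forall>i. Kb \<le> i \<longrightarrow> b i = 0"
    using assms by (auto simp: fin_supp_iff_bounded)
  then show thesis by (intro that[of "max Ka Kb"]) simp_all
qed

lemma mdeg_add: "fin_supp a \<Longrightarrow> fin_supp b \<Longrightarrow> mdeg (\<lambda>i. a i + b i) = mdeg a + mdeg b"
proof -
  assume "fin_supp a" "fin_supp b"
  then obtain K where Ka: "\<forall>i. K \<le> i \<longrightarrow> a i = 0" and Kb: "\<forall>i. K \<le> i \<longrightarrow> b i = 0"
    by (rule fin_supp_common_bound)
  have "mdeg a = (\<Sum>i<K. a i)" "mdeg b = (\<Sum>i<K. b i)" "mdeg (\<lambda>i. a i + b i) = (\<Sum>i<K. a i + b i)"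
    using Ka Kb by (simp_all add: mdeg_eq_sum_lessThan)
  then show ?thesis by (simp add: sum.distrib)
qed

lemma fin_supp_le: "\<forall>i. a i \<le> m i \<Longrightarrow> fin_supp m \<Longrightarrow> fin_supp a"
  unfolding fin_supp_def
proof (rule finite_subset[of _ "{i. m i \<noteq> 0}"])
  assume "\<forall>i. a i \<le> m i"
  then show "{i. a i \<noteq> 0} \<subseteq> {i. m i \<noteq> 0}" by (intro Collect_mono) (metis le_zero_eq)
qed

lemma fin_supp_diff: "fin_supp m \<Longrightarrow> fin_supp (\<lambda>i. m i - a i)"
  by (rule fin_supp_le[of _ m]) auto

lemma mdeg_add_diff:
  assumes "\<forall>i. a i \<le> m i" and "fin_supp m"
  shows "mdeg a + mdeg (\<lambda>i. m i - a i) = mdeg m"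
proof -
  have "m = (\<lambda>i. a i + (m i - a i))" using assms(1) by (simp add: fun_eq_iff)
  then show ?thesis
    using mdeg_add[OF fin_supp_le[OF assms] fin_supp_diff[OF assms(2), of a]] by simp
qed

lemma finite_divisors: "fin_supp m \<Longrightarrow> finite {a. \<forall>i. a i \<le> m i}"
proof -
  assume m: "fin_supp m"
  then obtain K where K: "\<forall>j. K \<le> j \<longrightarrow> m j = 0" by (auto simp: fin_supp_iff_bounded)
  have "{a. \<forall>i. a i \<le> m i} \<subseteq> box_monoms K (mdeg m)"
  proof
    fix a assume "a \<in> {a. \<forall>i. a i \<le> m i}"
    then have a: "a i \<le> m i" for i by simp
    have "\<forall>i. K \<le> i \<longrightarrow> a i = 0" using a K by (metis le_zero_eq)
    moreover have "\<forall>i. a i \<le> mdeg m" using a exponent_le_mdeg[OF m] le_trans by blast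
    ultimately show "a \<in> box_monoms K (mdeg m)" by (simp add: box_monoms_def)
  qed
  then show ?thesis using finite_box_monoms finite_subset by blast
qed

lemma series_mult_at_zero: "series_mult g h (\<lambda>_. 0) = g (\<lambda>_. 0) * h (\<lambda>_. 0)"
proof -
  have "{a::monom. \<forall>i. a i \<le> 0} = {\<lambda>_. 0}" by (auto simp: fun_eq_iff)
  then show ?thesis by (simp add: series_mult_def)
qed

lemma series_mult_commute: "series_mult g h = series_mult h g"
proof
  fix m
  show "series_mult g h m = series_mult h g m"
    unfolding series_mult_def
    by (rule sum.reindex_bij_witness[where i="\<lambda>a i. m i - a i" and j="\<lambda>a i. m i - a i"])
      (simp_all add: fun_eq_iff mult.commute)
qed

section \<open>Degrees of products of series\<close>

definition deg_bounded :: "series \<Rightarrow> nat \<Rightarrow> bool" where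
  "deg_bounded f D \<longleftrightarrow> (\<forall>m. f m \<noteq> 0 \<longrightarrow> fin_supp m \<and> mdeg m \<le> D)"

definition homogeneous :: "series \<Rightarrow> nat \<Rightarrow> bool" where
  "homogeneous f n \<longleftrightarrow> (\<forall>m. f m \<noteq> 0 \<longrightarrow> fin_supp m \<and> mdeg m = n)"

lemma sym_fun_deg_bounded: "sym_fun f \<Longrightarrow> \<exists>D. deg_bounded f D"
  unfolding sym_fun_def deg_bounded_def by blast

lemma deg_bounded_mono: "deg_bounded f D \<Longrightarrow> D \<le> D' \<Longrightarrow> deg_bounded f D'"
  unfolding deg_bounded_def by fastforce

lemma homogeneous_at_zero:
  assumes "homogeneous f n" and "n \<noteq> 0"
  shows "f (\<lambda>_. 0) = 0"
proof -
  have "mdeg (\<lambda>_. 0) = 0" by (simp add: mdeg_def)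
  then show ?thesis using assms unfolding homogeneous_def by metis
qed

lemma digit_sum_less: "B > 0 \<Longrightarrow> \<forall>i<K. x i < B \<Longrightarrow> (\<Sum>i<K. x i * B^i) < (B::nat)^K"
proof (induction K)
  case 0 thus ?case by simp
next
  case (Suc K)
  have IH: "(\<Sum>i<K. x i * B^i) < B^K" using Suc by simp
  have "x K \<le> B - 1" using Suc.prems by auto
  hence "x K * B^K \<le> (B - 1) * B^K" by (rule mult_right_mono) simp
  moreover have "(\<Sum>i<Suc K. x i * B^i) = (\<Sum>i<K. x i * B^i) + x K * B^K" by simp
  ultimately have "(\<Sum>i<Suc K. x i * B^i) < B^K + (B - 1) * B^K" using IH by linarith
  also have "\<dots> = B * B^K" using \<open>B > 0\<close> by (cases B) auto
  finally show ?case by simp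
qed

lemma digit_sum_inj: "B > 0 \<Longrightarrow> \<forall>i<K. x i < B \<Longrightarrow> \<forall>i<K. y i < B \<Longrightarrow>
   (\<Sum>i<K. x i * B^i) = (\<Sum>i<K. y i * (B::nat)^i) \<Longrightarrow> \<forall>i<K. x i = y i"
proof (induction K)
  case 0 thus ?case by simp
next
  case (Suc K)
  let ?Sx = "\<Sum>i<K. x i * B^i" and ?Sy = "\<Sum>i<K. y i * B^i"
  have bx: "?Sx < B^K" using digit_sum_less[of B K x] Suc.prems by simp
  have by': "?Sy < B^K" using digit_sum_less[of B K y] Suc.prems by simp
  have eq: "?Sx + x K * B^K = ?Sy + y K * B^K" using Suc.prems(4) by simp
  have pos: "B^K > 0" using \<open>B > 0\<close> by simp
  have "(?Sx + x K * B^K) div B^K = x K" using bx pos by simp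
  moreover have "(?Sy + y K * B^K) div B^K = y K" using by' pos by simp
  ultimately have xK: "x K = y K" using eq by simp
  hence "?Sx = ?Sy" using eq by simp
  moreover have "\<forall>i<K. x i < B" using Suc.prems(2) by simp
  moreover have "\<forall>i<K. y i < B" using Suc.prems(3) by simp
  ultimately have h: "\<forall>i<K. x i = y i" using Suc.IH[OF Suc.prems(1)] by blast
  show ?case
  proof (intro allI impI)
    fix i assume "i < Suc K" thus "x i = y i" using h xK by (cases "i = K") auto
  qed
qed

lemma series_mult_eq_single:
  assumes "fin_supp m" and "\<forall>i. a i \<le> m i"
    and "\<And>x. \<forall>i. x i \<le> m i \<Longrightarrow> x \<noteq> a \<Longrightarrow> f x * g (\<lambda>i. m i - x i) = 0"
  shows "series_mult f g m = f a * g (\<lambda>i. m i - a i)"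
proof -
  have "series_mult f g m = f a * g (\<lambda>i. m i - a i)
      + (\<Sum>x\<in>{x. \<forall>i. x i \<le> m i} - {a}. f x * g (\<lambda>i. m i - x i))"
    unfolding series_mult_def using assms(1,2) finite_divisors by (simp add: sum.remove)
  also have "(\<Sum>x\<in>{x. \<forall>i. x i \<le> m i} - {a}. f x * g (\<lambda>i. m i - x i)) = 0"
    by (intro sum.neutral ballI assms(3)) auto
  finally show ?thesis by simp
qed

lemma digit_weight_inj:
  fixes x y :: monom
  assumes "\<forall>i. K \<le> i \<longrightarrow> x i = 0" "\<forall>i. K \<le> i \<longrightarrow> y i = 0" "\<forall>i. x i < B" "\<forall>i. y i < B"
    and "(\<Sum>i<K. x i * B ^ i) = (\<Sum>i<K. y i * B ^ i)"
  shows "x = y"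
proof
  fix i
  have "B > 0" using assms(3) by (metis gr_zeroI not_less0)
  then have "\<forall>i<K. x i = y i" using digit_sum_inj[of B K x y] assms(3-5) by blast
  then show "x i = y i" using assms(1,2) by (cases "i < K") auto
qed

lemma top_degree_factors:
  assumes "deg_bounded f Df" and "deg_bounded g Dg" and "fin_supp m" and "mdeg m = Df + Dg"
    and "\<forall>i. x i \<le> m i" and "f x \<noteq> 0" and "g (\<lambda>i. m i - x i) \<noteq> 0"
  shows "mdeg x = Df" and "mdeg (\<lambda>i. m i - x i) = Dg"
proof -
  have "mdeg x \<le> Df" "mdeg (\<lambda>i. m i - x i) \<le> Dg" using assms by (auto simp: deg_bounded_def)
  moreover have "mdeg x + mdeg (\<lambda>i. m i - x i) = Df + Dg" using mdeg_add_diff assms(3-5) by metis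
  ultimately show "mdeg x = Df" and "mdeg (\<lambda>i. m i - x i) = Dg" by linarith+
qed

lemma series_mult_top_degree:
  assumes bf: "deg_bounded f Df" and bg: "deg_bounded g Dg"
    and a0: "f a0 \<noteq> 0" "mdeg a0 = Df" and b0: "g b0 \<noteq> 0" "mdeg b0 = Dg"
  shows "\<exists>m. series_mult f g m \<noteq> 0 \<and> mdeg m = Df + Dg"
proof -
  have "fin_supp a0" "fin_supp b0" using bf bg a0 b0 by (auto simp: deg_bounded_def)
  then obtain K where K: "\<forall>j. K \<le> j \<longrightarrow> a0 j = 0" "\<forall>j. K \<le> j \<longrightarrow> b0 j = 0"
    by (rule fin_supp_common_bound)
  text \<open>Read the exponents of a monomial as base-\<open>B\<close> digits. The top-degree terms of \<open>f\<close> and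
    of \<open>g\<close> of maximal weight multiply to the only contribution to their product monomial.\<close>
  define B where "B = Df + Dg + 1"
  define w where "w m = (\<Sum>i<K. m i * B ^ i)" for m :: monom
  define top where "top h D x \<longleftrightarrow> h x \<noteq> 0 \<and> mdeg x = D \<and> (\<forall>i. K \<le> i \<longrightarrow> x i = 0)"
    for h :: series and D x
  have top_lt: "x i < B" if "top h D x" "deg_bounded h D" "D \<le> Df + Dg" for h D x i
    using that exponent_le_mdeg[of x i] by (auto simp: top_def deg_bounded_def B_def)
  have w_lt: "w x < B ^ K" if "top h D x" "deg_bounded h D" "D \<le> Df + Dg" for h D x
    unfolding w_def by (rule digit_sum_less) (use top_lt[OF that] in \<open>auto simp: B_def\<close>)
  obtain a where a: "top f Df a" and amax: "\<And>x. top f Df x \<Longrightarrow> w x \<le> w a"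
    using Lattices_Big.ex_has_greatest_nat[of "top f Df" a0 w "B ^ K"] a0 K w_lt[OF _ bf] top_def
    by (metis le_add1)
  obtain b where b: "top g Dg b" and bmax: "\<And>y. top g Dg y \<Longrightarrow> w y \<le> w b"
    using Lattices_Big.ex_has_greatest_nat[of "top g Dg" b0 w "B ^ K"] b0 K w_lt[OF _ bg] top_def
    by (metis le_add2)
  define m where "m i = a i + b i" for i
  have fin_a: "fin_supp a" and fin_b: "fin_supp b" and fin_m: "fin_supp m"
    using a b by (auto simp: top_def m_def fin_supp_iff_bounded)
  have dm: "mdeg m = Df + Dg"
    using mdeg_add[OF fin_a fin_b] a b by (simp add: top_def m_def[abs_def])
  have "series_mult f g m = f a * g (\<lambda>i. m i - a i)"
  proof (rule series_mult_eq_single[OF fin_m])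
    show "\<forall>i. a i \<le> m i" by (simp add: m_def)
    fix x assume xm: "\<forall>i. x i \<le> m i" and xa: "x \<noteq> a"
    show "f x * g (\<lambda>i. m i - x i) = 0"
    proof (rule ccontr)
      define y where "y i = m i - x i" for i
      assume "f x * g (\<lambda>i. m i - x i) \<noteq> 0"
      then have fx: "f x \<noteq> 0" and gy: "g y \<noteq> 0" by (auto simp: y_def[abs_def])
      have "mdeg x = Df" "mdeg y = Dg"
        using top_degree_factors[OF bf bg fin_m dm xm] fx gy by (simp_all add: y_def[abs_def])
      moreover have "\<forall>i. K \<le> i \<longrightarrow> x i = 0 \<and> y i = 0"
        using xm a b by (auto simp: top_def m_def y_def) (metis add_0 le_zero_eq)
      ultimately have tx: "top f Df x" and ty: "top g Dg y" using fx gy by (auto simp: top_def)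
      have "m i = x i + y i" for i using xm by (simp add: y_def)
      then have "w m = w x + w y" by (simp add: w_def sum.distrib algebra_simps)
      moreover have "w m = w a + w b" by (simp add: w_def m_def sum.distrib algebra_simps)
      ultimately have "w x = w a" using amax[OF tx] bmax[OF ty] by linarith
      then have "x = a"
        using tx a top_lt[OF tx bf] top_lt[OF a bf] by (intro digit_weight_inj) (auto simp: top_def w_def)
      with xa show False ..
    qed
  qed
  also have "\<dots> \<noteq> 0" using a b by (simp add: top_def m_def)
  finally show ?thesis using dm by blast
qed

lemma series_mult_lowest_degree:
  assumes "fin_supp m" and "\<forall>x. mdeg x < mdeg m \<longrightarrow> g x = 0"
  shows "series_mult g h m = g m * h (\<lambda>_. 0)"
proof -
  have "series_mult g h m = g m * h (\<lambda>i. m i - m i)"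
  proof (rule series_mult_eq_single[OF assms(1)])
    fix x assume xm: "\<forall>i. x i \<le> m i" and "x \<noteq> m"
    then have "(\<lambda>i. m i - x i) \<noteq> (\<lambda>_. 0)" by (metis diff_is_0_eq ext le_antisym)
    then have "mdeg (\<lambda>i. m i - x i) \<noteq> 0" using mdeg_eq_0_iff fin_supp_diff[OF assms(1)] by blast
    then have "mdeg x < mdeg m" using mdeg_add_diff[OF xm assms(1)] by linarith
    then show "g x * h (\<lambda>i. m i - x i) = 0" using assms(2) by simp
  qed simp
  then show ?thesis by simp
qed

lemma deg_bounded_attained:
  assumes "deg_bounded f D" and "f a \<noteq> 0"
  obtains a' where "f a' \<noteq> 0" and "deg_bounded f (mdeg a')" and "mdeg a \<le> mdeg a'"
proof -
  obtain a' where a': "f a' \<noteq> 0" and max: "\<forall>y. f y \<noteq> 0 \<longrightarrow> mdeg y \<le> mdeg a'"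
    using Lattices_Big.ex_has_greatest_nat[of "\<lambda>x. f x \<noteq> 0" a mdeg "Suc D"] assms
    by (auto simp: deg_bounded_def less_Suc_eq_le)
  then have "deg_bounded f (mdeg a')" using assms(1) by (simp add: deg_bounded_def)
  with a' max assms(2) show thesis by (intro that) auto
qed

lemma homogeneous_product_factor_at_zero:
  assumes bg: "deg_bounded g Dg" and bh: "deg_bounded h Dh"
    and hom: "homogeneous (series_mult g h) n" and g: "g a \<noteq> 0" and h: "\<not> series_const h"
  shows "h (\<lambda>_. 0) = 0"
proof (rule ccontr)
  assume h0: "h (\<lambda>_. 0) \<noteq> 0"
  obtain a' where ga': "g a' \<noteq> 0" and low: "\<forall>y. g y \<noteq> 0 \<longrightarrow> mdeg a' \<le> mdeg y"
    using ex_has_least_nat[of "\<lambda>x. g x \<noteq> 0" a mdeg] g by blast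
  have "fin_supp a'" using bg ga' by (auto simp: deg_bounded_def)
  then have "series_mult g h a' = g a' * h (\<lambda>_. 0)"
    using low by (intro series_mult_lowest_degree) (auto simp: not_le[symmetric])
  then have "mdeg a' = n" using hom ga' h0 by (auto simp: homogeneous_def)
  obtain b where hb: "h b \<noteq> 0" and "b \<noteq> (\<lambda>_. 0)" using h by (auto simp: series_const_def)
  then have "mdeg b \<noteq> 0" using bh mdeg_eq_0_iff by (auto simp: deg_bounded_def)
  obtain a'' where "g a'' \<noteq> 0" "deg_bounded g (mdeg a'')" "mdeg a' \<le> mdeg a''"
    using deg_bounded_attained[OF bg ga'] .
  moreover obtain b' where "h b' \<noteq> 0" "deg_bounded h (mdeg b')" "mdeg b \<le> mdeg b'"
    using deg_bounded_attained[OF bh hb] .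
  ultimately obtain m where "series_mult g h m \<noteq> 0" "mdeg m = mdeg a'' + mdeg b'"
    using series_mult_top_degree by metis
  then show False
    using hom \<open>mdeg a' = n\<close> \<open>mdeg a' \<le> mdeg a''\<close> \<open>mdeg b \<le> mdeg b'\<close> \<open>mdeg b \<noteq> 0\<close>
    by (auto simp: homogeneous_def)
qed

lemma homogeneous_product_factors_at_zero:
  assumes "deg_bounded g Dg" and "deg_bounded h Dh" and "homogeneous (series_mult g h) n"
    and "\<not> series_const g" and "\<not> series_const h"
  shows "g (\<lambda>_. 0) = 0" and "h (\<lambda>_. 0) = 0"
proof -
  obtain a b where "g a \<noteq> 0" "h b \<noteq> 0" using assms(4,5) by (auto simp: series_const_def)
  then show "h (\<lambda>_. 0) = 0" "g (\<lambda>_. 0) = 0"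
    using assms homogeneous_product_factor_at_zero[of h Dh g Dg n] series_mult_commute[of g h]
    by (auto intro: homogeneous_product_factor_at_zero)
qed

section \<open>Principal specialization\<close>

text \<open>Once \<open>D\<close> bounds the degree of \<open>f\<close>, \<open>principal_spec f N D\<close> is the evaluation
  \<open>f(1,\<dots>,1,0,0,\<dots>)\<close> with \<open>N\<close> ones.\<close>

definition principal_spec :: "series \<Rightarrow> nat \<Rightarrow> nat \<Rightarrow> complex" where
  "principal_spec f N D = (\<Sum>m\<in>box_monoms N D. f m)"

lemma sum_box_monoms_shift:
  assumes bh: "deg_bounded h Dh" and a: "a \<in> box_monoms N D" and aD: "\<forall>i. a i + Dh \<le> D"
  shows "(\<Sum>m\<in>{m \<in> box_monoms N D. \<forall>i. a i \<le> m i}. h (\<lambda>i. m i - a i)) = principal_spec h N D"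
proof -
  let ?T = "{b \<in> box_monoms N D. \<forall>i. a i + b i \<le> D}"
  have "(\<Sum>m\<in>{m \<in> box_monoms N D. \<forall>i. a i \<le> m i}. h (\<lambda>i. m i - a i)) = (\<Sum>b\<in>?T. h b)"
    by (rule sum.reindex_bij_witness[where i="\<lambda>b i. a i + b i" and j="\<lambda>m i. m i - a i"])
      (use a in \<open>auto simp: box_monoms_def fun_eq_iff intro: le_trans[OF diff_le_self]\<close>)
  also have "\<dots> = principal_spec h N D"
    unfolding principal_spec_def
  proof (rule sum.mono_neutral_left[OF finite_box_monoms])
    show "\<forall>b\<in>box_monoms N D - ?T. h b = 0"
    proof
      fix b assume "b \<in> box_monoms N D - ?T"
      then obtain i where "D < a i + b i" by (auto simp: not_le)
      then have "Dh < b i" using aD by (metis add_less_cancel_left le_less_trans not_le)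
      then show "h b = 0" using bh exponent_le_mdeg[of b i] by (force simp: deg_bounded_def)
    qed
  qed auto
  finally show ?thesis .
qed

lemma principal_spec_mult:
  assumes bg: "deg_bounded g Dg" and bh: "deg_bounded h Dh" and D: "Dg + Dh \<le> D"
  shows "principal_spec (series_mult g h) N D = principal_spec g N D * principal_spec h N D"
proof -
  define M where "M = box_monoms N D"
  have divisors: "{a. \<forall>i. a i \<le> m i} = {a \<in> M. \<forall>i. a i \<le> m i}" if "m \<in> M" for m
    using that by (auto simp: M_def box_monoms_def intro: le_trans) (metis le_zero_eq)
  have "principal_spec (series_mult g h) N D
      = (\<Sum>m\<in>M. \<Sum>a\<in>{a \<in> M. \<forall>i. a i \<le> m i}. g a * h (\<lambda>i. m i - a i))"
    unfolding principal_spec_def series_mult_def M_def[symmetric] by (rule sum.cong) (simp_all add: divisors)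
  also have "\<dots> = (\<Sum>a\<in>M. \<Sum>m\<in>{m \<in> M. \<forall>i. a i \<le> m i}. g a * h (\<lambda>i. m i - a i))"
    by (rule sum.swap_restrict) (simp_all add: M_def finite_box_monoms)
  also have "\<dots> = (\<Sum>a\<in>M. g a * principal_spec h N D)"
  proof (rule sum.cong[OF refl])
    fix a assume a: "a \<in> M"
    show "(\<Sum>m\<in>{m \<in> M. \<forall>i. a i \<le> m i}. g a * h (\<lambda>i. m i - a i)) = g a * principal_spec h N D"
    proof (cases "g a = 0")
      case False
      then have "fin_supp a" "mdeg a \<le> Dg" using bg by (auto simp: deg_bounded_def)
      then have "a i + Dh \<le> D" for i using D exponent_le_mdeg[of a i] by linarith
      then show ?thesis
        using sum_box_monoms_shift[OF bh a[unfolded M_def]] by (simp add: M_def flip: sum_distrib_left)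
    qed simp
  qed
  also have "\<dots> = principal_spec g N D * principal_spec h N D"
    by (simp add: principal_spec_def M_def sum_distrib_right)
  finally show ?thesis .
qed

lemma ex_bij_image_lessThan_card:
  fixes S :: "nat set"
  assumes fin: "finite S"
  obtains \<sigma> where "bij \<sigma>" and "\<sigma> ` {..<card S} = S"
proof -
  define A where "A = {..<card S}"
  have "card (A - S) = card (S - A)"
    using fin by (simp add: A_def card_Diff_subset_Int Int_commute)
  then obtain f where f: "bij_betw f (A - S) (S - A)"
    using finite_same_card_bij fin by (metis A_def finite_Diff finite_lessThan)
  define \<sigma> where "\<sigma> x = (if x \<in> A - S then f x else if x \<in> S - A then inv_into (A - S) f x else x)" for x
  have b1: "bij_betw \<sigma> (A - S) (S - A)"
    using f by (rule bij_betw_cong[THEN iffD1, rotated]) (simp add: \<sigma>_def)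
  have b2: "bij_betw \<sigma> (S - A) (A - S)"
    using bij_betw_inv_into[OF f] by (rule bij_betw_cong[THEN iffD1, rotated]) (auto simp: \<sigma>_def)
  define R where "R = - ((A - S) \<union> (S - A))"
  have b3: "bij_betw \<sigma> R R"
    using bij_betw_id[of R] by (rule bij_betw_cong[THEN iffD1, rotated]) (auto simp: \<sigma>_def R_def)
  have "bij_betw \<sigma> (((A - S) \<union> (S - A)) \<union> R) (((S - A) \<union> (A - S)) \<union> R)"
    by (rule bij_betw_combine[OF bij_betw_combine[OF b1 b2] b3]) (auto simp: R_def)
  moreover have "((A - S) \<union> (S - A)) \<union> R = UNIV" "((S - A) \<union> (A - S)) \<union> R = UNIV"
    by (auto simp: R_def)
  ultimately have "bij \<sigma>" by simp
  moreover have "\<sigma> ` A = S"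
  proof -
    have "\<sigma> ` A = \<sigma> ` (A \<inter> S) \<union> \<sigma> ` (A - S)" by blast
    also have "\<sigma> ` (A \<inter> S) = A \<inter> S" by (force simp: \<sigma>_def)
    also have "\<sigma> ` (A - S) = S - A" using b1 by (simp add: bij_betw_def)
    finally show ?thesis by blast
  qed
  ultimately show thesis using that A_def by blast
qed

definition monoms_with_support :: "nat \<Rightarrow> nat set \<Rightarrow> monom set" where
  "monoms_with_support D S = {m. {i. m i \<noteq> 0} = S \<and> (\<forall>i. m i \<le> D)}"

lemma comp_in_monoms_with_support:
  "m \<in> monoms_with_support D S \<Longrightarrow> m \<circ> \<sigma> \<in> monoms_with_support D (\<sigma> -` S)"
  by (auto simp: monoms_with_support_def)

lemma sum_monoms_with_support_card:
  assumes g: "sym_fun g" and fin: "finite S"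
  shows "sum g (monoms_with_support D S) = sum g (monoms_with_support D {..<card S})"
proof -
  obtain \<sigma> where bij: "bij \<sigma>" and im: "\<sigma> ` {..<card S} = S"
    using ex_bij_image_lessThan_card[OF fin] by blast
  have inv: "\<sigma> \<circ> inv \<sigma> = id" "inv \<sigma> \<circ> \<sigma> = id"
    using bij by (simp_all add: bij_is_surj bij_is_inj surj_iff[symmetric] inj_iff[symmetric])
  have pre: "\<sigma> -` S = {..<card S}" using im bij by (metis bij_is_inj inj_vimage_image_eq)
  have pre': "inv \<sigma> -` {..<card S} = S"
    using im bij by (simp add: bij_vimage_eq_inv_image bij_imp_bij_inv inv_inv_eq)
  show ?thesis
  proof (rule sum.reindex_bij_witness[where i="\<lambda>m. m \<circ> inv \<sigma>" and j="\<lambda>m. m \<circ> \<sigma>"])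
    fix m assume "m \<in> monoms_with_support D S"
    then show "m \<circ> \<sigma> \<in> monoms_with_support D {..<card S}"
      using comp_in_monoms_with_support[of m D S \<sigma>] pre by simp
    show "m \<circ> \<sigma> \<circ> inv \<sigma> = m" by (simp add: comp_assoc inv)
    show "g (m \<circ> \<sigma>) = g m" using g bij by (simp add: sym_fun_def)
  next
    fix m assume "m \<in> monoms_with_support D {..<card S}"
    then show "m \<circ> inv \<sigma> \<in> monoms_with_support D S"
      using comp_in_monoms_with_support[of m D "{..<card S}" "inv \<sigma>"] pre' by simp
    show "m \<circ> inv \<sigma> \<circ> \<sigma> = m" by (simp add: comp_assoc inv)
  qed
qed

lemma sum_Pow_card:
  fixes t :: "nat \<Rightarrow> 'b::comm_semiring_1"
  assumes "finite A"
  shows "(\<Sum>S\<in>Pow A. t (card S)) = (\<Sum>j\<le>card A. of_nat (card A choose j) * t j)"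
proof -
  have "card ` Pow A \<subseteq> {..card A}" using assms by (auto intro: card_mono)
  then have "(\<Sum>S\<in>Pow A. t (card S)) = (\<Sum>j\<le>card A. \<Sum>S\<in>{S \<in> Pow A. card S = j}. t (card S))"
    using assms by (intro sum.group[symmetric]) simp_all
  also have "\<dots> = (\<Sum>j\<le>card A. of_nat (card A choose j) * t j)"
  proof (rule sum.cong[OF refl])
    fix j
    have "(\<Sum>S\<in>{S \<in> Pow A. card S = j}. t (card S)) = of_nat (card {S \<in> Pow A. card S = j}) * t j"
      by simp
    also have "{S \<in> Pow A. card S = j} = {S. S \<subseteq> A \<and> card S = j}" by auto
    finally show "(\<Sum>S\<in>{S \<in> Pow A. card S = j}. t (card S)) = of_nat (card A choose j) * t j"
      using n_subsets[OF assms, of j] by simp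
  qed
  finally show ?thesis .
qed

lemma box_monoms_with_support:
  assumes S: "S \<subseteq> {..<N}"
  shows "{m \<in> box_monoms N D. {i. m i \<noteq> 0} = S} = monoms_with_support D S"
proof (intro set_eqI iffI)
  fix m assume "m \<in> {m \<in> box_monoms N D. {i. m i \<noteq> 0} = S}"
  then show "m \<in> monoms_with_support D S" by (simp add: box_monoms_def monoms_with_support_def)
next
  fix m assume m: "m \<in> monoms_with_support D S"
  have "m i = 0" if "N \<le> i" for i
  proof (rule ccontr)
    assume "m i \<noteq> 0"
    then have "i \<in> S" using m by (auto simp: monoms_with_support_def)
    with S that show False by auto
  qed
  then show "m \<in> {m \<in> box_monoms N D. {i. m i \<noteq> 0} = S}"
    using m by (simp add: box_monoms_def monoms_with_support_def)
qed

text \<open>Group the monomials by their support; by symmetry a group depends only on its size.\<close>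

lemma principal_spec_sym_expansion:
  assumes g: "sym_fun g"
  shows "principal_spec g N D = (\<Sum>j\<le>N. of_nat (N choose j) * sum g (monoms_with_support D {..<j}))"
proof -
  have supp: "(\<lambda>m. {i. m i \<noteq> 0}) ` box_monoms N D \<subseteq> Pow {..<N}"
  proof (intro image_subsetI PowI subsetI)
    fix m i assume "m \<in> box_monoms N D" "i \<in> {i. m i \<noteq> 0}"
    then show "i \<in> {..<N}" by (simp add: box_monoms_def) (use not_less in blast)
  qed
  have "principal_spec g N D = (\<Sum>S\<in>Pow {..<N}. \<Sum>m\<in>{m \<in> box_monoms N D. {i. m i \<noteq> 0} = S}. g m)"
    unfolding principal_spec_def by (rule sum.group[symmetric, OF finite_box_monoms _ supp]) simp
  also have "\<dots> = (\<Sum>S\<in>Pow {..<N}. sum g (monoms_with_support D {..<card S}))"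
  proof (rule sum.cong[OF refl])
    fix S assume "S \<in> Pow {..<N}"
    then have S: "S \<subseteq> {..<N}" by simp
    then have "finite S" by (rule finite_subset) simp
    then show "(\<Sum>m\<in>{m \<in> box_monoms N D. {i. m i \<noteq> 0} = S}. g m) = sum g (monoms_with_support D {..<card S})"
      using sum_monoms_with_support_card[OF g \<open>finite S\<close>] box_monoms_with_support[OF S] by (simp only:)
  qed
  also have "\<dots> = (\<Sum>j\<le>N. of_nat (N choose j) * sum g (monoms_with_support D {..<j}))"
    using sum_Pow_card[of "{..<N}"] by simp
  finally show ?thesis .
qed

lemma sum_monoms_without_support: "sum g (monoms_with_support D {}) = g (\<lambda>_. 0)"
proof -
  have "monoms_with_support D {} = {\<lambda>_. 0}" by (auto simp: monoms_with_support_def fun_eq_iff)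
  then show ?thesis by simp
qed

lemma sum_monoms_with_large_support:
  assumes "deg_bounded g D" and "D < j"
  shows "sum g (monoms_with_support D {..<j}) = 0"
proof (rule sum.neutral, rule ballI)
  fix m assume "m \<in> monoms_with_support D {..<j}"
  then have supp: "{i. m i \<noteq> 0} = {..<j}" by (simp add: monoms_with_support_def)
  then have "mdeg m = (\<Sum>i<j. m i)" by (simp add: mdeg_def)
  also have "(\<Sum>i<j. m i) \<ge> (\<Sum>i<j. 1)"
    using supp by (intro sum_mono) (auto simp: set_eq_iff Suc_le_eq)
  finally show "g m = 0" using assms by (auto simp: deg_bounded_def)
qed

lemma gbinomial_Suc_poly: "\<exists>p. \<forall>x::complex. x gchoose Suc k = x * poly p x"
proof (induction k)
  case 0
  show ?case by (intro exI[of _ 1]) simp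
next
  case (Suc k)
  then obtain p where p: "\<forall>x::complex. x gchoose Suc k = x * poly p x" by blast
  define q where "q = smult (1 / of_nat (Suc (Suc k))) ([:-1, 1:] * pcompose p [:-1, 1:])"
  have "x gchoose Suc (Suc k) = x * poly q x" for x :: complex
  proof -
    have "of_nat (Suc (Suc k)) * (x gchoose Suc (Suc k)) = x * ((x - 1) gchoose Suc k)"
      by (rule gbinomial_absorption)
    then show ?thesis using p by (simp add: q_def poly_pcompose field_simps del: of_nat_Suc)
  qed
  then show ?case by blast
qed

lemma principal_spec_sym_poly:
  assumes g: "sym_fun g" and g0: "g (\<lambda>_. 0) = 0" and bg: "deg_bounded g D"
  obtains r where "\<And>N. principal_spec g N D = of_nat N * poly r (of_nat N)"
proof -
  define t where "t j = sum g (monoms_with_support D {..<j})" for j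
  obtain p where p: "\<And>k x. (x::complex) gchoose Suc k = x * poly (p k) x"
    using gbinomial_Suc_poly by metis
  define r where "r = (\<Sum>k<D. smult (t (Suc k)) (p k))"
  have "principal_spec g N D = of_nat N * poly r (of_nat N)" for N
  proof -
    define F where "F j = of_nat (N choose j) * t j" for j
    have "principal_spec g N D = (\<Sum>j\<le>N. F j)"
      by (simp add: principal_spec_sym_expansion[OF g] F_def t_def)
    also have "\<dots> = (\<Sum>j\<le>N + D. F j)"
      by (rule sum.mono_neutral_left) (auto simp: F_def)
    also have "\<dots> = (\<Sum>j\<le>D. F j)"
      by (rule sum.mono_neutral_right) (auto simp: F_def t_def sum_monoms_with_large_support[OF bg])
    also have "\<dots> = F 0 + (\<Sum>k<D. F (Suc k))"
      unfolding lessThan_Suc_atMost[symmetric] by (rule sum.lessThan_Suc_shift)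
    also have "F 0 = 0" by (simp add: F_def t_def sum_monoms_without_support g0)
    also have "(\<Sum>k<D. F (Suc k)) = (\<Sum>k<D. of_nat N * (t (Suc k) * poly (p k) (of_nat N)))"
      by (simp add: F_def binomial_gbinomial p algebra_simps)
    also have "\<dots> = of_nat N * poly r (of_nat N)"
      by (simp add: r_def poly_sum sum_distrib_left)
    finally show ?thesis by simp
  qed
  then show thesis by (rule that)
qed

text \<open>In polynomial terms: \<open>x\<^sup>2\<close> does not divide \<open>x (x - 1)\<^sup>k\<close>.\<close>

lemma no_split_of_x_times_pred_power:
  fixes p q :: "complex poly"
  assumes "\<And>N. N \<ge> 1 \<Longrightarrow> of_nat N * poly p (of_nat N) * (of_nat N * poly q (of_nat N))
                 = of_nat N * (of_nat N - 1) ^ k"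
  shows False
proof -
  define d where "d = [:0, 1:] * p * q - [:-1, 1:] ^ k"
  have roots: "poly d (of_nat N) = 0" if "N \<ge> 1" for N
  proof -
    have "(of_nat N :: complex) \<noteq> 0" using that by simp
    then show ?thesis using assms[OF that] by (simp add: d_def poly_power algebra_simps)
  qed
  have "d = 0"
  proof (rule ccontr)
    assume "d \<noteq> 0"
    then have "finite {x. poly d x = 0}" by (rule poly_roots_finite)
    moreover have "of_nat ` {1..} \<subseteq> {x::complex. poly d x = 0}" using roots by auto
    ultimately have "finite (of_nat ` {1::nat..} :: complex set)" using finite_subset by blast
    then show False using infinite_Ici[of "1::nat"] by (simp add: finite_image_iff inj_on_def)
  qed
  then have "poly d 0 = 0" by simp
  then show False by (simp add: d_def poly_power)
qed

section \<open>The chromatic symmetric function\<close>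

definition proper_colorings :: "'a set \<Rightarrow> ('a \<Rightarrow> 'a \<Rightarrow> bool) \<Rightarrow> nat set \<Rightarrow> ('a \<Rightarrow> nat) set" where
  "proper_colorings V E C = {\<kappa> \<in> V \<rightarrow>\<^sub>E C. proper_coloring V E \<kappa>}"

definition color_counts :: "'a set \<Rightarrow> ('a \<Rightarrow> nat) \<Rightarrow> monom" where
  "color_counts V \<kappa> i = card {v \<in> V. \<kappa> v = i}"

definition colorings_of_type :: "'a set \<Rightarrow> ('a \<Rightarrow> 'a \<Rightarrow> bool) \<Rightarrow> monom \<Rightarrow> ('a \<Rightarrow> nat) set" where
  "colorings_of_type V E m = {\<kappa> \<in> proper_colorings V E UNIV. color_counts V \<kappa> = m}"

lemma chromatic_symfun_eq_card: "chromatic_symfun V E m = of_nat (card (colorings_of_type V E m))"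
  unfolding chromatic_symfun_def colorings_of_type_def proper_colorings_def color_counts_def
  by (rule arg_cong[where f="\<lambda>S. of_nat (card S)"]) (auto simp: fun_eq_iff)

lemma color_counts_cong: "(\<And>v. v \<in> V \<Longrightarrow> \<kappa> v = \<kappa>' v) \<Longrightarrow> color_counts V \<kappa> = color_counts V \<kappa>'"
  unfolding color_counts_def by (intro ext arg_cong[where f=card] Collect_cong) auto

lemma proper_coloring_cong: "(\<And>v. v \<in> V \<Longrightarrow> \<kappa> v = \<kappa>' v) \<Longrightarrow> proper_coloring V E \<kappa> \<longleftrightarrow> proper_coloring V E \<kappa>'"
  unfolding proper_coloring_def by simp

lemma color_counts_pos: "finite V \<Longrightarrow> v \<in> V \<Longrightarrow> color_counts V \<kappa> (\<kappa> v) \<noteq> 0"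
proof -
  assume "finite V" "v \<in> V"
  then have "finite {w \<in> V. \<kappa> w = \<kappa> v}" "v \<in> {w \<in> V. \<kappa> w = \<kappa> v}" by simp_all
  then show ?thesis unfolding color_counts_def by (metis card_0_eq empty_iff)
qed

lemma fin_supp_color_counts: "finite V \<Longrightarrow> fin_supp (color_counts V \<kappa>)"
  unfolding fin_supp_def color_counts_def
  by (rule finite_subset[of _ "\<kappa> ` V"]) (auto simp: card_eq_0_iff)

lemma mdeg_color_counts:
  assumes "finite V"
  shows "mdeg (color_counts V \<kappa>) = card V"
proof -
  have "mdeg (color_counts V \<kappa>) = (\<Sum>i\<in>\<kappa> ` V. card {v\<in>V. \<kappa> v = i})"
    unfolding color_counts_def using assms by (intro mdeg_eq_sum) (auto simp: card_eq_0_iff)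
  also have "\<dots> = (\<Sum>i\<in>\<kappa> ` V. \<Sum>v\<in>{v\<in>V. \<kappa> v = i}. 1)" by simp
  also have "\<dots> = (\<Sum>v\<in>V. 1)" using assms by (rule sum.image_gen[symmetric])
  finally show ?thesis by simp
qed

lemma homogeneous_chromatic_symfun:
  assumes "finite V"
  shows "homogeneous (chromatic_symfun V E) (card V)"
  unfolding homogeneous_def
proof (intro allI impI)
  fix m assume "chromatic_symfun V E m \<noteq> 0"
  then have "colorings_of_type V E m \<noteq> {}" by (auto simp: chromatic_symfun_eq_card)
  then obtain \<kappa> where "color_counts V \<kappa> = m" by (auto simp: colorings_of_type_def)
  then show "fin_supp m \<and> mdeg m = card V"
    using fin_supp_color_counts[OF assms] mdeg_color_counts[OF assms] by blast
qed

lemma finite_colorings_of_type: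
  assumes "finite V"
  shows "finite (colorings_of_type V E m)"
proof -
  have "colorings_of_type V E m \<subseteq> V \<rightarrow>\<^sub>E {i. m i \<noteq> 0}"
    using color_counts_pos[OF assms]
    by (auto simp: colorings_of_type_def proper_colorings_def PiE_def Pi_def)
  moreover have "finite (V \<rightarrow>\<^sub>E {i. m i \<noteq> 0})" if "colorings_of_type V E m \<noteq> {}"
    using that assms fin_supp_color_counts
    by (auto simp: colorings_of_type_def fin_supp_def intro!: finite_PiE)
  ultimately show ?thesis using finite_subset by fastforce
qed

lemma color_counts_comp_bij:
  assumes "bij \<sigma>"
  shows "color_counts V (\<sigma> \<circ> \<kappa>) = color_counts V \<kappa> \<circ> inv \<sigma>"
proof
  fix i
  have "{v \<in> V. \<sigma> (\<kappa> v) = i} = {v \<in> V. \<kappa> v = inv \<sigma> i}"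
    using assms by (auto simp: bij_inv_eq_iff)
  then show "color_counts V (\<sigma> \<circ> \<kappa>) i = (color_counts V \<kappa> \<circ> inv \<sigma>) i"
    by (simp add: color_counts_def)
qed

lemma proper_coloring_comp_inj: "inj \<sigma> \<Longrightarrow> proper_coloring V E (\<sigma> \<circ> \<kappa>) \<longleftrightarrow> proper_coloring V E \<kappa>"
  unfolding proper_coloring_def by (simp add: inj_eq)

lemma bij_betw_recolor:
  assumes "bij \<sigma>"
  shows "bij_betw (\<lambda>\<kappa>. restrict (\<sigma> \<circ> \<kappa>) V) (colorings_of_type V E m) (colorings_of_type V E (m \<circ> inv \<sigma>))"
proof -
  have inv: "bij (inv \<sigma>)" "inv (inv \<sigma>) = \<sigma>" "\<And>x. inv \<sigma> (\<sigma> x) = x" "\<And>x. \<sigma> (inv \<sigma> x) = x"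
    using assms by (simp_all add: bij_imp_bij_inv inv_inv_eq bij_is_inj bij_is_surj surj_f_inv_f)
  have recolor: "restrict (\<tau> \<circ> \<kappa>) V \<in> colorings_of_type V E (m' \<circ> inv \<tau>)"
    if "bij \<tau>" "\<kappa> \<in> colorings_of_type V E m'" for \<tau> \<kappa> m'
  proof -
    have "color_counts V (restrict (\<tau> \<circ> \<kappa>) V) = color_counts V (\<tau> \<circ> \<kappa>)"
      by (rule color_counts_cong) simp
    also have "\<dots> = m' \<circ> inv \<tau>"
      using that by (simp add: color_counts_comp_bij colorings_of_type_def)
    moreover have "proper_coloring V E (restrict (\<tau> \<circ> \<kappa>) V) \<longleftrightarrow> proper_coloring V E (\<tau> \<circ> \<kappa>)"
      by (rule proper_coloring_cong) simp
    moreover have "proper_coloring V E (\<tau> \<circ> \<kappa>)"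
      using that by (simp add: proper_coloring_comp_inj bij_is_inj colorings_of_type_def proper_colorings_def)
    ultimately show ?thesis by (simp add: colorings_of_type_def proper_colorings_def)
  qed
  show ?thesis
  proof (rule bij_betw_byWitness[where f'="\<lambda>\<kappa>. restrict (inv \<sigma> \<circ> \<kappa>) V"])
    show "\<forall>\<kappa>\<in>colorings_of_type V E m. restrict (inv \<sigma> \<circ> restrict (\<sigma> \<circ> \<kappa>) V) V = \<kappa>"
      using inv by (auto simp: colorings_of_type_def proper_colorings_def fun_eq_iff PiE_def extensional_def)
    show "\<forall>\<kappa>\<in>colorings_of_type V E (m \<circ> inv \<sigma>). restrict (\<sigma> \<circ> restrict (inv \<sigma> \<circ> \<kappa>) V) V = \<kappa>"
      using inv by (auto simp: colorings_of_type_def proper_colorings_def fun_eq_iff PiE_def extensional_def)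
    show "(\<lambda>\<kappa>. restrict (\<sigma> \<circ> \<kappa>) V) ` colorings_of_type V E m \<subseteq> colorings_of_type V E (m \<circ> inv \<sigma>)"
      using recolor[OF assms] by blast
    show "(\<lambda>\<kappa>. restrict (inv \<sigma> \<circ> \<kappa>) V) ` colorings_of_type V E (m \<circ> inv \<sigma>) \<subseteq> colorings_of_type V E m"
      using recolor[OF inv(1), of _ "m \<circ> inv \<sigma>"] inv(2,3) by (auto simp: o_def)
  qed
qed

lemma sym_fun_chromatic_symfun:
  assumes "finite V"
  shows "sym_fun (chromatic_symfun V E)"
  unfolding sym_fun_def
proof (intro conjI allI impI)
  show "\<not> fin_supp m \<Longrightarrow> chromatic_symfun V E m = 0" for m
    using homogeneous_chromatic_symfun[OF assms] by (auto simp: homogeneous_def)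
  show "\<exists>d. \<forall>m. chromatic_symfun V E m \<noteq> 0 \<longrightarrow> mdeg m \<le> d"
    using homogeneous_chromatic_symfun[OF assms] by (auto simp: homogeneous_def)
  fix \<sigma> :: "nat \<Rightarrow> nat" and m :: monom
  assume "bij \<sigma>"
  then have "bij (inv \<sigma>)" "inv (inv \<sigma>) = \<sigma>" by (simp_all add: bij_imp_bij_inv inv_inv_eq)
  then show "chromatic_symfun V E (m \<circ> \<sigma>) = chromatic_symfun V E m"
    using bij_betw_recolor[of "inv \<sigma>" V E m] by (simp add: chromatic_symfun_eq_card bij_betw_same_card)
qed

lemma chromatic_symfun_nonconst:
  assumes fin: "finite V" and ne: "V \<noteq> {}" and irrefl: "\<forall>v. \<not> E v v"
  shows "\<not> series_const (chromatic_symfun V E)"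
proof -
  obtain f where "bij_betw f V {0..<card V}" using ex_bij_betw_finite_nat[OF fin] by blast
  then have inj: "inj_on f V" by (rule bij_betw_imp_inj_on)
  define m where "m = color_counts V (restrict f V)"
  have "proper_coloring V E (restrict f V)"
    using irrefl inj by (auto simp: proper_coloring_def inj_on_def)
  then have "restrict f V \<in> colorings_of_type V E m"
    by (simp add: colorings_of_type_def proper_colorings_def m_def)
  then have "chromatic_symfun V E m \<noteq> 0"
    using finite_colorings_of_type[OF fin] by (auto simp: chromatic_symfun_eq_card)
  moreover have "m \<noteq> (\<lambda>_. 0)"
  proof
    assume "m = (\<lambda>_. 0)"
    then have "mdeg m = 0" by (simp add: mdeg_def)
    then show False using mdeg_color_counts[OF fin] fin ne by (simp add: m_def)
  qed
  ultimately show ?thesis by (auto simp: series_const_def)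
qed

lemma proper_colorings_eq_Union_types:
  assumes fin: "finite V" and D: "card V \<le> D"
  shows "proper_colorings V E {..<N} = (\<Union>m\<in>box_monoms N D. colorings_of_type V E m)"
proof (intro set_eqI iffI)
  fix \<kappa> assume \<kappa>: "\<kappa> \<in> proper_colorings V E {..<N}"
  have "color_counts V \<kappa> i = 0" if "N \<le> i" for i
  proof -
    have "{v \<in> V. \<kappa> v = i} = {}" using \<kappa> that by (force simp: proper_colorings_def PiE_def Pi_def)
    then show ?thesis unfolding color_counts_def by (simp only: card.empty)
  qed
  moreover have "color_counts V \<kappa> i \<le> D" for i
    using card_mono[OF fin, of "{v \<in> V. \<kappa> v = i}"] D by (auto simp: color_counts_def)
  ultimately have "color_counts V \<kappa> \<in> box_monoms N D" by (simp add: box_monoms_def)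
  moreover have "\<kappa> \<in> colorings_of_type V E (color_counts V \<kappa>)"
    using \<kappa> by (auto simp: proper_colorings_def colorings_of_type_def PiE_def)
  ultimately show "\<kappa> \<in> (\<Union>m\<in>box_monoms N D. colorings_of_type V E m)" by blast
next
  fix \<kappa> assume "\<kappa> \<in> (\<Union>m\<in>box_monoms N D. colorings_of_type V E m)"
  then obtain m where m: "m \<in> box_monoms N D" and \<kappa>: "\<kappa> \<in> colorings_of_type V E m" by blast
  have "\<kappa> v < N" if "v \<in> V" for v
  proof (rule ccontr)
    assume "\<not> \<kappa> v < N"
    then have "m (\<kappa> v) = 0" using m by (simp add: box_monoms_def)
    moreover have "color_counts V \<kappa> = m" using \<kappa> by (simp add: colorings_of_type_def)
    ultimately show False using color_counts_pos[OF fin that, of \<kappa>] by simp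
  qed
  then show "\<kappa> \<in> proper_colorings V E {..<N}"
    using \<kappa> by (auto simp: colorings_of_type_def proper_colorings_def PiE_def Pi_def)
qed

lemma principal_spec_chromatic_symfun:
  assumes fin: "finite V" and D: "card V \<le> D"
  shows "principal_spec (chromatic_symfun V E) N D = of_nat (card (proper_colorings V E {..<N}))"
proof -
  have "principal_spec (chromatic_symfun V E) N D = of_nat (\<Sum>m\<in>box_monoms N D. card (colorings_of_type V E m))"
    by (simp add: principal_spec_def chromatic_symfun_eq_card)
  also have "(\<Sum>m\<in>box_monoms N D. card (colorings_of_type V E m)) = card (proper_colorings V E {..<N})"
    unfolding proper_colorings_eq_Union_types[OF fin D]
    by (rule card_UN_disjoint[symmetric])
      (simp_all add: finite_box_monoms finite_colorings_of_type[OF fin], auto simp: colorings_of_type_def)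
  finally show ?thesis .
qed

lemma proper_coloring_Un:
  assumes "\<forall>u\<in>V1. \<forall>v\<in>V2. \<not> E u v \<and> \<not> E v u"
  shows "proper_coloring (V1 \<union> V2) E \<kappa> \<longleftrightarrow> proper_coloring V1 E \<kappa> \<and> proper_coloring V2 E \<kappa>"
  using assms unfolding proper_coloring_def by blast

lemma color_counts_Un:
  assumes "finite V1" and "finite V2" and "V1 \<inter> V2 = {}"
  shows "color_counts (V1 \<union> V2) \<kappa> i = color_counts V1 \<kappa> i + color_counts V2 \<kappa> i"
proof -
  have "{v \<in> V1 \<union> V2. \<kappa> v = i} = {v \<in> V1. \<kappa> v = i} \<union> {v \<in> V2. \<kappa> v = i}" by blast
  then show ?thesis using assms by (simp add: color_counts_def card_Un_disjoint disjoint_iff)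
qed

lemma restrict_colorings_of_type_Un:
  assumes fin: "finite V1" "finite V2" and disj: "V1 \<inter> V2 = {}"
    and noE: "\<forall>u\<in>V1. \<forall>v\<in>V2. \<not> E u v \<and> \<not> E v u" and \<kappa>: "\<kappa> \<in> colorings_of_type (V1 \<union> V2) E m"
  shows "restrict \<kappa> V1 \<in> colorings_of_type V1 E (color_counts V1 \<kappa>)"
    and "restrict \<kappa> V2 \<in> colorings_of_type V2 E (\<lambda>i. m i - color_counts V1 \<kappa> i)"
proof -
  have "proper_coloring V1 E \<kappa>" "proper_coloring V2 E \<kappa>" "color_counts (V1 \<union> V2) \<kappa> = m"
    using \<kappa> proper_coloring_Un[OF noE] by (auto simp: colorings_of_type_def proper_colorings_def)
  moreover have "color_counts V1 (restrict \<kappa> V1) = color_counts V1 \<kappa>"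
    "color_counts V2 (restrict \<kappa> V2) = color_counts V2 \<kappa>"
    by (rule color_counts_cong, simp)+
  moreover have "proper_coloring V1 E (restrict \<kappa> V1) = proper_coloring V1 E \<kappa>"
    "proper_coloring V2 E (restrict \<kappa> V2) = proper_coloring V2 E \<kappa>"
    by (rule proper_coloring_cong, simp)+
  ultimately show "restrict \<kappa> V1 \<in> colorings_of_type V1 E (color_counts V1 \<kappa>)"
    and "restrict \<kappa> V2 \<in> colorings_of_type V2 E (\<lambda>i. m i - color_counts V1 \<kappa> i)"
    by (auto simp: colorings_of_type_def proper_colorings_def fun_eq_iff color_counts_Un[OF fin disj])
      (metis add_diff_cancel_left')
qed

lemma merge_colorings_of_type:
  assumes fin: "finite V1" "finite V2" and disj: "V1 \<inter> V2 = {}"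
    and noE: "\<forall>u\<in>V1. \<forall>v\<in>V2. \<not> E u v \<and> \<not> E v u" and am: "\<forall>i. a i \<le> m i"
    and \<kappa>1: "\<kappa>1 \<in> colorings_of_type V1 E a" and \<kappa>2: "\<kappa>2 \<in> colorings_of_type V2 E (\<lambda>i. m i - a i)"
  shows "(\<lambda>v. if v \<in> V1 then \<kappa>1 v else \<kappa>2 v) \<in> colorings_of_type (V1 \<union> V2) E m"
    and "color_counts V1 (\<lambda>v. if v \<in> V1 then \<kappa>1 v else \<kappa>2 v) = a"
proof -
  define \<kappa> where "\<kappa> v = (if v \<in> V1 then \<kappa>1 v else \<kappa>2 v)" for v
  have "color_counts V1 \<kappa> = color_counts V1 \<kappa>1" "color_counts V2 \<kappa> = color_counts V2 \<kappa>2"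
    using disj by (auto simp: \<kappa>_def intro!: color_counts_cong)
  moreover have "proper_coloring V1 E \<kappa> = proper_coloring V1 E \<kappa>1"
    "proper_coloring V2 E \<kappa> = proper_coloring V2 E \<kappa>2"
    using disj by (auto simp: \<kappa>_def intro!: proper_coloring_cong)
  ultimately have "proper_coloring (V1 \<union> V2) E \<kappa>" "color_counts V1 \<kappa> = a"
    "color_counts (V1 \<union> V2) \<kappa> = m" "\<kappa> \<in> V1 \<union> V2 \<rightarrow>\<^sub>E UNIV"
    using \<kappa>1 \<kappa>2 am proper_coloring_Un[OF noE]
    by (auto simp: colorings_of_type_def proper_colorings_def color_counts_Un[OF fin disj] fun_eq_iff
        \<kappa>_def PiE_def extensional_def)
  then show "\<kappa> \<in> colorings_of_type (V1 \<union> V2) E m" and "color_counts V1 \<kappa> = a"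
    by (simp_all add: colorings_of_type_def proper_colorings_def)
qed

lemma bij_betw_split_coloring:
  assumes fin: "finite V1" "finite V2" and disj: "V1 \<inter> V2 = {}"
    and noE: "\<forall>u\<in>V1. \<forall>v\<in>V2. \<not> E u v \<and> \<not> E v u" and am: "\<forall>i. a i \<le> m i"
  shows "bij_betw (\<lambda>\<kappa>. (restrict \<kappa> V1, restrict \<kappa> V2))
           {\<kappa> \<in> colorings_of_type (V1 \<union> V2) E m. color_counts V1 \<kappa> = a}
           (colorings_of_type V1 E a \<times> colorings_of_type V2 E (\<lambda>i. m i - a i))"
proof (rule bij_betw_byWitness[where f'="\<lambda>(\<kappa>1, \<kappa>2) v. if v \<in> V1 then \<kappa>1 v else \<kappa>2 v"])
  note defs = colorings_of_type_def proper_colorings_def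
  show "\<forall>\<kappa>\<in>{\<kappa> \<in> colorings_of_type (V1 \<union> V2) E m. color_counts V1 \<kappa> = a}.
      (\<lambda>(\<kappa>1, \<kappa>2) v. if v \<in> V1 then \<kappa>1 v else \<kappa>2 v) (restrict \<kappa> V1, restrict \<kappa> V2) = \<kappa>"
    by (auto simp: defs PiE_def extensional_def fun_eq_iff)
  show "\<forall>p\<in>colorings_of_type V1 E a \<times> colorings_of_type V2 E (\<lambda>i. m i - a i).
      (\<lambda>\<kappa>. (restrict \<kappa> V1, restrict \<kappa> V2)) ((\<lambda>(\<kappa>1, \<kappa>2) v. if v \<in> V1 then \<kappa>1 v else \<kappa>2 v) p) = p"
    using disj by (auto simp: defs PiE_def extensional_def fun_eq_iff)
  show "(\<lambda>\<kappa>. (restrict \<kappa> V1, restrict \<kappa> V2)) ` {\<kappa> \<in> colorings_of_type (V1 \<union> V2) E m. color_counts V1 \<kappa> = a}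
      \<subseteq> colorings_of_type V1 E a \<times> colorings_of_type V2 E (\<lambda>i. m i - a i)"
  proof (rule image_subsetI)
    fix \<kappa> assume "\<kappa> \<in> {\<kappa> \<in> colorings_of_type (V1 \<union> V2) E m. color_counts V1 \<kappa> = a}"
    then show "(restrict \<kappa> V1, restrict \<kappa> V2) \<in> colorings_of_type V1 E a \<times> colorings_of_type V2 E (\<lambda>i. m i - a i)"
      using restrict_colorings_of_type_Un[OF fin disj noE, of \<kappa> m] by auto
  qed
  show "(\<lambda>(\<kappa>1, \<kappa>2) v. if v \<in> V1 then \<kappa>1 v else \<kappa>2 v) ` (colorings_of_type V1 E a \<times> colorings_of_type V2 E (\<lambda>i. m i - a i))
      \<subseteq> {\<kappa> \<in> colorings_of_type (V1 \<union> V2) E m. color_counts V1 \<kappa> = a}"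
  proof (rule image_subsetI)
    fix p assume "p \<in> colorings_of_type V1 E a \<times> colorings_of_type V2 E (\<lambda>i. m i - a i)"
    then obtain \<kappa>1 \<kappa>2 where p: "p = (\<kappa>1, \<kappa>2)" and "\<kappa>1 \<in> colorings_of_type V1 E a"
      and "\<kappa>2 \<in> colorings_of_type V2 E (\<lambda>i. m i - a i)" by auto
    then show "(\<lambda>(\<kappa>1, \<kappa>2) v. if v \<in> V1 then \<kappa>1 v else \<kappa>2 v) p
        \<in> {\<kappa> \<in> colorings_of_type (V1 \<union> V2) E m. color_counts V1 \<kappa> = a}"
      using merge_colorings_of_type[OF fin disj noE am] by simp
  qed
qed

lemma chromatic_symfun_disjoint_union:
  assumes fin: "finite V1" "finite V2" and disj: "V1 \<inter> V2 = {}"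
    and noE: "\<forall>u\<in>V1. \<forall>v\<in>V2. \<not> E u v \<and> \<not> E v u"
  shows "chromatic_symfun (V1 \<union> V2) E = series_mult (chromatic_symfun V1 E) (chromatic_symfun V2 E)"
proof
  fix m :: monom
  let ?L = "{a. \<forall>i. a i \<le> m i}"
  have hom: "homogeneous (chromatic_symfun W E) (card W)" if "finite W" for W
    using homogeneous_chromatic_symfun[OF that] .
  show "chromatic_symfun (V1 \<union> V2) E m = series_mult (chromatic_symfun V1 E) (chromatic_symfun V2 E) m"
  proof (cases "fin_supp m")
    case False
    have "chromatic_symfun V1 E a * chromatic_symfun V2 E (\<lambda>i. m i - a i) = 0" if "a \<in> ?L" for a
    proof (rule ccontr)
      assume "chromatic_symfun V1 E a * chromatic_symfun V2 E (\<lambda>i. m i - a i) \<noteq> 0"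
      then have "fin_supp a" "fin_supp (\<lambda>i. m i - a i)"
        using hom[OF fin(1)] hom[OF fin(2)] by (auto simp: homogeneous_def)
      then have "fin_supp (\<lambda>i. a i + (m i - a i))" by (auto simp: fin_supp_iff_bounded) (metis max.bounded_iff)
      with False that show False by simp
    qed
    then have "series_mult (chromatic_symfun V1 E) (chromatic_symfun V2 E) m = 0"
      unfolding series_mult_def by (blast intro: sum.neutral)
    moreover have "chromatic_symfun (V1 \<union> V2) E m = 0"
      using False hom[of "V1 \<union> V2"] fin by (auto simp: homogeneous_def)
    ultimately show ?thesis by simp
  next
    case True
    let ?C = "colorings_of_type (V1 \<union> V2) E m"
    have "color_counts V1 \<kappa> \<in> ?L" if "\<kappa> \<in> ?C" for \<kappa>
      using that color_counts_Un[OF fin disj] by (auto simp: colorings_of_type_def)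
    then have "card ?C = (\<Sum>a\<in>?L. card {\<kappa> \<in> ?C. color_counts V1 \<kappa> = a})"
      using sum.group[of ?C ?L "color_counts V1" "\<lambda>_. 1::nat"]
        finite_colorings_of_type[of "V1 \<union> V2"] finite_divisors[OF True] fin
      by (simp add: image_subsetI)
    also have "\<dots> = (\<Sum>a\<in>?L. card (colorings_of_type V1 E a) * card (colorings_of_type V2 E (\<lambda>i. m i - a i)))"
      using bij_betw_same_card[OF bij_betw_split_coloring[OF fin disj noE]]
      by (intro sum.cong) (simp_all add: card_cartesian_product)
    finally show ?thesis by (simp add: chromatic_symfun_eq_card series_mult_def)
  qed
qed

section \<open>Proper colourings of a tree\<close>

definition is_path :: "'a set \<Rightarrow> ('a \<Rightarrow> 'a \<Rightarrow> bool) \<Rightarrow> 'a list \<Rightarrow> bool" where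
  "is_path V E xs \<longleftrightarrow> xs \<noteq> [] \<and> distinct xs \<and> set xs \<subseteq> V
     \<and> (\<forall>i. Suc i < length xs \<longrightarrow> E (xs ! i) (xs ! Suc i))"

lemma is_path_snoc:
  assumes "is_path V E xs" and "x \<in> V" and "x \<notin> set xs" and "E (last xs) x"
  shows "is_path V E (xs @ [x])"
  unfolding is_path_def
proof (intro conjI allI impI)
  fix i assume i: "Suc i < length (xs @ [x])"
  show "E ((xs @ [x]) ! i) ((xs @ [x]) ! Suc i)"
  proof (cases "Suc i < length xs")
    case True
    then show ?thesis using assms(1) by (simp add: is_path_def nth_append)
  next
    case False
    then have "i = length xs - 1" "xs \<noteq> []" using i assms(1) by (auto simp: is_path_def)
    then show ?thesis using assms(4) by (simp add: nth_append last_conv_nth)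
  qed
qed (use assms in \<open>auto simp: is_path_def\<close>)

lemma is_cycle_drop_path:
  assumes "is_path V E xs" and "j + 3 \<le> length xs" and "E (last xs) (xs ! j)"
  shows "is_cycle V E (drop j xs)"
  unfolding is_cycle_def
proof (intro conjI allI impI)
  fix i assume "Suc i < length (drop j xs)"
  then show "E (drop j xs ! i) (drop j xs ! Suc i)" using assms(1) by (simp add: is_path_def)
next
  show "E (last (drop j xs)) (hd (drop j xs))"
    using assms(2,3) by (simp add: hd_drop_conv_nth)
qed (use assms set_drop_subset[of j xs] in \<open>auto simp: is_path_def\<close>)

lemma longest_path_ends_in_leaf:
  assumes acyclic: "\<nexists>cs. is_cycle V E cs" and irrefl: "\<forall>v. \<not> E v v"
    and path: "is_path V E xs" and len: "length xs \<ge> 2"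
    and longest: "\<And>ys. is_path V E ys \<Longrightarrow> length ys \<le> length xs"
    and x: "x \<in> V" "E (last xs) x"
  shows "x = xs ! (length xs - 2)"
proof -
  have "x \<in> set xs"
    using longest[OF is_path_snoc[OF path x(1) _ x(2)]] by auto
  then obtain j where j: "j < length xs" "xs ! j = x" by (auto simp: in_set_conv_nth)
  have "xs \<noteq> []" using len by auto
  then have last: "last xs = xs ! (length xs - 1)" by (rule last_conv_nth)
  have "j \<noteq> length xs - 1" using j x(2) irrefl last by auto
  moreover have "\<not> j + 3 \<le> length xs" using is_cycle_drop_path[OF path] j x(2) acyclic by auto
  ultimately have "j = length xs - 2" using j(1) by linarith
  then show ?thesis using j by simp
qed

lemma tree_has_leaf:
  assumes tree: "tree V E" and card: "card V \<ge> 2"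
  obtains l p where "l \<in> V" and "p \<in> V" and "E l p" and "\<forall>x\<in>V. E l x \<longrightarrow> x = p"
proof -
  have fin: "finite V" and inV: "\<forall>u v. E u v \<longrightarrow> u \<in> V \<and> v \<in> V" and sym: "\<forall>u v. E u v \<longrightarrow> E v u"
    and irrefl: "\<forall>v. \<not> E v v" and acyclic: "\<nexists>cs. is_cycle V E cs"
    and conn: "\<forall>u\<in>V. \<forall>v\<in>V. E\<^sup>*\<^sup>* u v"
    using tree by (auto simp: tree_def forest_def simple_graph_def connected_graph_def)
  have "\<not> card V \<le> 1" using card by simp
  then obtain u v where u: "u \<in> V" and v: "v \<in> V" and "u \<noteq> v"
    using card_le_Suc0_iff_eq[OF fin] by auto
  then obtain y where y: "E u y"
    using conn by (metis converse_rtranclpE)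
  let ?P = "{xs. is_path V E xs}"
  have bounded: "?P \<subseteq> {xs. set xs \<subseteq> V \<and> length xs \<le> card V}"
    using fin by (auto simp: is_path_def distinct_card[symmetric] card_mono)
  have uy: "[u, y] \<in> ?P" using y u inV irrefl by (auto simp: is_path_def less_Suc_eq)
  obtain xs where xs: "xs \<in> ?P" and longest: "\<And>ys. ys \<in> ?P \<Longrightarrow> length ys \<le> length xs"
    using Lattices_Big.ex_has_greatest_nat[of "\<lambda>xs. xs \<in> ?P" "[u, y]" length "Suc (card V)"] uy
      bounded by (auto simp: less_Suc_eq_le)
  have len: "length xs \<ge> 2" using longest[OF uy] by simp
  define l where "l = last xs"
  define p where "p = xs ! (length xs - 2)"
  have "E p l"
  proof -
    have step: "E (xs ! i) (xs ! Suc i)" if "Suc i < length xs" for i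
      using xs that by (simp add: is_path_def)
    have "Suc (length xs - 2) = length xs - 1" "xs \<noteq> []" using len by auto
    then show ?thesis using step[of "length xs - 2"] len by (simp add: p_def l_def last_conv_nth)
  qed
  moreover have "l \<in> V" "p \<in> V" using xs len by (auto simp: is_path_def p_def l_def)
  moreover have "\<forall>x\<in>V. E l x \<longrightarrow> x = p"
    using longest_path_ends_in_leaf[OF acyclic irrefl _ len] xs longest by (simp add: l_def p_def)
  ultimately show thesis using sym that by blast
qed

definition del_vertex :: "('a \<Rightarrow> 'a \<Rightarrow> bool) \<Rightarrow> 'a \<Rightarrow> 'a \<Rightarrow> 'a \<Rightarrow> bool" where
  "del_vertex E l x y \<longleftrightarrow> E x y \<and> x \<noteq> l \<and> y \<noteq> l"

lemma rtranclp_del_leaf: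
  assumes sym: "\<forall>u v. E u v \<longrightarrow> E v u" and leaf: "\<forall>x. E l x \<longrightarrow> x = p" and "p \<noteq> l"
    and "E\<^sup>*\<^sup>* u y" and "u \<noteq> l"
  shows "(del_vertex E l)\<^sup>*\<^sup>* u (if y = l then p else y)"
  using assms(4)
proof (induction rule: rtranclp_induct)
  case base
  then show ?case using \<open>u \<noteq> l\<close> by simp
next
  case (step y z)
  show ?case
  proof (cases "y = l \<or> z = l")
    case True
    then have "y = p \<or> z = p" using step.hyps(2) leaf sym by blast
    then show ?thesis using step.IH True \<open>p \<noteq> l\<close> by auto
  next
    case False
    then have "del_vertex E l y z" using step.hyps(2) by (simp add: del_vertex_def)
    then show ?thesis using step.IH False by auto
  qed
qed

lemma tree_del_leaf:
  assumes tree: "tree V E" and "p \<noteq> l" and leaf: "\<forall>x. E l x \<longrightarrow> x = p"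
  shows "tree (V - {l}) (del_vertex E l)"
proof -
  have sg: "simple_graph V E" and acyclic: "\<nexists>cs. is_cycle V E cs" and conn: "connected_graph V E"
    using tree by (auto simp: tree_def forest_def)
  have "simple_graph (V - {l}) (del_vertex E l)"
    using sg by (auto simp: simple_graph_def del_vertex_def)
  moreover have "\<nexists>cs. is_cycle (V - {l}) (del_vertex E l) cs"
    using acyclic by (auto simp: is_cycle_def del_vertex_def)
  moreover have "connected_graph (V - {l}) (del_vertex E l)"
    unfolding connected_graph_def
  proof (intro ballI)
    fix u v assume u: "u \<in> V - {l}" and v: "v \<in> V - {l}"
    then have "E\<^sup>*\<^sup>* u v" using conn by (simp add: connected_graph_def)
    moreover have "\<forall>u v. E u v \<longrightarrow> E v u" using sg by (simp add: simple_graph_def)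
    ultimately show "(del_vertex E l)\<^sup>*\<^sup>* u v"
      using rtranclp_del_leaf[of E l p u v] leaf \<open>p \<noteq> l\<close> u v by simp
  qed
  ultimately show ?thesis by (simp add: tree_def forest_def)
qed

lemma proper_colorings_del_vertex:
  "proper_colorings (V - {l}) (del_vertex E l) C = proper_colorings (V - {l}) E C"
  by (auto simp: proper_colorings_def proper_coloring_def del_vertex_def)

lemma proper_coloring_leaf:
  assumes sym: "\<forall>u v. E u v \<longrightarrow> E v u" and "l \<in> V" "p \<in> V" and "E l p" and leaf: "\<forall>x. E l x \<longrightarrow> x = p"
  shows "proper_coloring V E \<kappa> \<longleftrightarrow> proper_coloring (V - {l}) E \<kappa> \<and> \<kappa> l \<noteq> \<kappa> p"
proof
  assume "proper_coloring V E \<kappa>"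
  then show "proper_coloring (V - {l}) E \<kappa> \<and> \<kappa> l \<noteq> \<kappa> p"
    using assms unfolding proper_coloring_def by blast
next
  assume \<kappa>: "proper_coloring (V - {l}) E \<kappa> \<and> \<kappa> l \<noteq> \<kappa> p"
  show "proper_coloring V E \<kappa>"
    unfolding proper_coloring_def
  proof (intro ballI impI)
    fix u v assume "u \<in> V" "v \<in> V" "E u v"
    then consider "u = l" "v = p" | "v = l" "u = p" | "u \<noteq> l" "v \<noteq> l"
      using sym leaf by blast
    then show "\<kappa> u \<noteq> \<kappa> v"
      using \<kappa> \<open>u \<in> V\<close> \<open>v \<in> V\<close> \<open>E u v\<close> unfolding proper_coloring_def by cases auto
  qed
qed

lemma bij_betw_extend_leaf_coloring:
  assumes sym: "\<forall>u v. E u v \<longrightarrow> E v u" and l: "l \<in> V" and p: "p \<in> V" "p \<noteq> l"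
    and "E l p" and leaf: "\<forall>x. E l x \<longrightarrow> x = p"
  shows "bij_betw (\<lambda>\<kappa>. (restrict \<kappa> (V - {l}), \<kappa> l)) (proper_colorings V E {..<N})
      (SIGMA \<kappa>:proper_colorings (V - {l}) E {..<N}. {..<N} - {\<kappa> p})"
proof -
  let ?A = "proper_colorings (V - {l}) E {..<N}"
  note proper = proper_coloring_leaf[OF sym l p(1) \<open>E l p\<close> leaf]
  have restrict: "proper_coloring (V - {l}) E (restrict \<kappa> (V - {l})) \<longleftrightarrow> proper_coloring (V - {l}) E \<kappa>"
    and update: "proper_coloring (V - {l}) E (\<kappa>(l := c)) \<longleftrightarrow> proper_coloring (V - {l}) E \<kappa>" for \<kappa> c
    by (rule proper_coloring_cong, simp)+
  show ?thesis
  proof (rule bij_betw_byWitness[where f'="\<lambda>(\<kappa>, c). \<kappa>(l := c)"])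
    show "\<forall>\<kappa>\<in>proper_colorings V E {..<N}. (\<lambda>(\<kappa>, c). \<kappa>(l := c)) (restrict \<kappa> (V - {l}), \<kappa> l) = \<kappa>"
      by (auto simp: proper_colorings_def PiE_def extensional_def fun_eq_iff)
    show "\<forall>q\<in>SIGMA \<kappa>:?A. {..<N} - {\<kappa> p}. (\<lambda>\<kappa>. (restrict \<kappa> (V - {l}), \<kappa> l)) ((\<lambda>(\<kappa>, c). \<kappa>(l := c)) q) = q"
      by (auto simp: proper_colorings_def PiE_def extensional_def fun_eq_iff)
    show "(\<lambda>\<kappa>. (restrict \<kappa> (V - {l}), \<kappa> l)) ` proper_colorings V E {..<N} \<subseteq> (SIGMA \<kappa>:?A. {..<N} - {\<kappa> p})"
    proof (rule image_subsetI)
      fix \<kappa> assume "\<kappa> \<in> proper_colorings V E {..<N}"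
      then have \<kappa>: "\<kappa> \<in> V \<rightarrow>\<^sub>E {..<N}" "proper_coloring (V - {l}) E \<kappa>" "\<kappa> l \<noteq> \<kappa> p"
        using proper by (auto simp: proper_colorings_def)
      then have "restrict \<kappa> (V - {l}) \<in> ?A" by (auto simp: proper_colorings_def restrict)
      moreover have "\<kappa> l < N" using \<kappa>(1) l by auto
      ultimately show "(restrict \<kappa> (V - {l}), \<kappa> l) \<in> (SIGMA \<kappa>:?A. {..<N} - {\<kappa> p})"
        using \<kappa>(3) p by simp
    qed
    show "(\<lambda>(\<kappa>, c). \<kappa>(l := c)) ` (SIGMA \<kappa>:?A. {..<N} - {\<kappa> p}) \<subseteq> proper_colorings V E {..<N}"
    proof (rule image_subsetI)
      fix q assume "q \<in> (SIGMA \<kappa>:?A. {..<N} - {\<kappa> p})"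
      then obtain \<kappa> c where q: "q = (\<kappa>, c)" and \<kappa>: "\<kappa> \<in> ?A" and c: "c < N" "c \<noteq> \<kappa> p" by auto
      have "\<kappa>(l := c) \<in> V \<rightarrow>\<^sub>E {..<N}"
        using \<kappa> c l by (auto simp: proper_colorings_def PiE_def Pi_def extensional_def)
      moreover have "proper_coloring (V - {l}) E (\<kappa>(l := c))" using \<kappa> update by (simp add: proper_colorings_def)
      ultimately show "(\<lambda>(\<kappa>, c). \<kappa>(l := c)) q \<in> proper_colorings V E {..<N}"
        using c p by (simp add: q proper_colorings_def proper)
    qed
  qed
qed

lemma card_proper_colorings_leaf:
  assumes fin: "finite V" and "\<forall>u v. E u v \<longrightarrow> E v u" and "l \<in> V" and p: "p \<in> V" "p \<noteq> l"
    and "E l p" and "\<forall>x. E l x \<longrightarrow> x = p"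
  shows "card (proper_colorings V E {..<N}) = card (proper_colorings (V - {l}) E {..<N}) * (N - 1)"
proof -
  let ?A = "proper_colorings (V - {l}) E {..<N}"
  have "card (proper_colorings V E {..<N}) = card (SIGMA \<kappa>:?A. {..<N} - {\<kappa> p})"
    using bij_betw_extend_leaf_coloring[OF assms(2-)] by (rule bij_betw_same_card)
  also have "\<dots> = (\<Sum>\<kappa>\<in>?A. card ({..<N} - {\<kappa> p}))"
    using fin by (intro card_SigmaI) (simp_all add: proper_colorings_def finite_PiE)
  also have "\<dots> = (\<Sum>\<kappa>\<in>?A. N - 1)"
    using p by (intro sum.cong) (auto simp: proper_colorings_def PiE_def Pi_def)
  finally show ?thesis by simp
qed

lemma card_proper_colorings_tree:
  assumes "tree V E" and "V \<noteq> {}"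
  shows "card (proper_colorings V E {..<N}) = N * (N - 1) ^ (card V - 1)"
  using assms
proof (induction "card V" arbitrary: V E rule: less_induct)
  case less
  have fin: "finite V" and sym: "\<forall>u v. E u v \<longrightarrow> E v u" and irrefl: "\<forall>v. \<not> E v v"
    and inV: "\<forall>u v. E u v \<longrightarrow> u \<in> V \<and> v \<in> V"
    using less.prems by (auto simp: tree_def forest_def simple_graph_def)
  show ?case
  proof (cases "card V \<ge> 2")
    case False
    moreover have "card V \<noteq> 0" using fin less.prems(2) by simp
    ultimately have "card V = 1" by linarith
    then obtain w where V: "V = {w}" by (rule card_1_singletonE)
    then have "proper_colorings V E {..<N} = V \<rightarrow>\<^sub>E {..<N}"
      using irrefl by (auto simp: proper_colorings_def proper_coloring_def)
    then show ?thesis using V by (simp add: card_PiE)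
  next
    case True
    obtain l p where l: "l \<in> V" and p: "p \<in> V" and "E l p" and leaf_V: "\<forall>x\<in>V. E l x \<longrightarrow> x = p"
      using tree_has_leaf[OF less.prems(1) True] by blast
    have "p \<noteq> l" using \<open>E l p\<close> irrefl by blast
    have leaf: "\<forall>x. E l x \<longrightarrow> x = p" using leaf_V inV by blast
    have card_del: "card (V - {l}) = card V - 1" using l fin by simp
    have "card (proper_colorings (V - {l}) E {..<N}) = N * (N - 1) ^ (card (V - {l}) - 1)"
      using less.hyps[of "V - {l}" "del_vertex E l"] tree_del_leaf[OF less.prems(1) \<open>p \<noteq> l\<close> leaf]
        card_del True p \<open>p \<noteq> l\<close> by (auto simp: proper_colorings_del_vertex)
    moreover have "card V - 1 = Suc (card (V - {l}) - 1)" using card_del True by simp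
    ultimately show ?thesis
      using card_proper_colorings_leaf[OF fin sym l p \<open>p \<noteq> l\<close> \<open>E l p\<close> leaf] by simp
  qed
qed

lemma principal_spec_excludes_factorization:
  assumes hom: "homogeneous (series_mult g h) n"
    and spec: "\<And>N D. n \<le> D \<Longrightarrow> principal_spec (series_mult g h) N D = of_nat (N * (N - 1) ^ k)"
    and g: "sym_fun g" "\<not> series_const g" and h: "sym_fun h" "\<not> series_const h"
  shows False
proof -
  obtain Dg Dh where bg: "deg_bounded g Dg" and bh: "deg_bounded h Dh"
    using sym_fun_deg_bounded g(1) h(1) by blast
  have g0: "g (\<lambda>_. 0) = 0" and h0: "h (\<lambda>_. 0) = 0"
    using homogeneous_product_factors_at_zero[OF bg bh hom g(2) h(2)] by simp_all
  define D where "D = Dg + Dh + n"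
  then have "Dg + Dh \<le> D" by simp
  have "deg_bounded g D" "deg_bounded h D"
    using deg_bounded_mono[OF bg] deg_bounded_mono[OF bh] by (simp_all add: D_def)
  then obtain rg rh where rg: "\<And>N. principal_spec g N D = of_nat N * poly rg (of_nat N)"
    and rh: "\<And>N. principal_spec h N D = of_nat N * poly rh (of_nat N)"
    using principal_spec_sym_poly[OF g(1) g0] principal_spec_sym_poly[OF h(1) h0] by metis
  have "of_nat N * poly rg (of_nat N) * (of_nat N * poly rh (of_nat N))
      = of_nat N * (of_nat N - 1 :: complex) ^ k" if "N \<ge> 1" for N
  proof -
    have "of_nat N * poly rg (of_nat N) * (of_nat N * poly rh (of_nat N)) = principal_spec (series_mult g h) N D"
      using principal_spec_mult[OF bg bh \<open>Dg + Dh \<le> D\<close>] by (simp add: rg rh)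
    also have "\<dots> = of_nat N * (of_nat N - 1 :: complex) ^ k"
      using spec[of D N] that by (simp add: D_def of_nat_diff)
    finally show ?thesis .
  qed
  then show False by (rule no_split_of_x_times_pred_power)
qed

lemma irreducible_Lambda_if_principal_spec:
  assumes sym: "sym_fun f" and hom: "homogeneous f n" and "n \<noteq> 0" and nonconst: "\<not> series_const f"
    and spec: "\<And>N D. n \<le> D \<Longrightarrow> principal_spec f N D = of_nat (N * (N - 1) ^ k)"
  shows "irreducible_Lambda f"
proof -
  have no_unit: "\<not> (\<exists>g. sym_fun g \<and> series_mult f g = series_one)"
  proof
    assume "\<exists>g. sym_fun g \<and> series_mult f g = series_one"
    then obtain g where "series_mult f g = series_one" by blast
    then have "series_mult f g (\<lambda>_. 0) = 1" by (simp add: series_one_def)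
    then show False using homogeneous_at_zero[OF hom \<open>n \<noteq> 0\<close>] by (simp add: series_mult_at_zero)
  qed
  show ?thesis
    using sym nonconst no_unit principal_spec_excludes_factorization[of _ _ n k] hom spec
    unfolding irreducible_Lambda_def by metis
qed

lemma not_irreducible_chromatic_symfun_if_disconnected:
  assumes sg: "simple_graph V E" and disconnected: "\<not> connected_graph V E"
  shows "\<not> irreducible_Lambda (chromatic_symfun V E)"
proof -
  obtain u v where u: "u \<in> V" and v: "v \<in> V" and "\<not> E\<^sup>*\<^sup>* u v"
    using disconnected by (auto simp: connected_graph_def)
  define V1 where "V1 = {w \<in> V. E\<^sup>*\<^sup>* u w}"
  define V2 where "V2 = V - V1"
  have fin: "finite V1" "finite V2" and irrefl: "\<forall>v. \<not> E v v" and sym: "\<forall>x y. E x y \<longrightarrow> E y x"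
    using sg by (auto simp: simple_graph_def V1_def V2_def)
  have V: "V = V1 \<union> V2" and disj: "V1 \<inter> V2 = {}" by (auto simp: V1_def V2_def)
  have noE: "\<forall>x\<in>V1. \<forall>y\<in>V2. \<not> E x y \<and> \<not> E y x"
    using sym by (auto simp: V1_def V2_def intro: rtranclp.rtrancl_into_rtrancl)
  have "V1 \<noteq> {}" "V2 \<noteq> {}" using u v \<open>\<not> E\<^sup>*\<^sup>* u v\<close> by (auto simp: V1_def V2_def)
  then have "\<not> series_const (chromatic_symfun V1 E)" "\<not> series_const (chromatic_symfun V2 E)"
    using chromatic_symfun_nonconst[of V1 E] chromatic_symfun_nonconst[of V2 E] fin irrefl by blast+
  then show ?thesis
    using sym_fun_chromatic_symfun[OF fin(1)] sym_fun_chromatic_symfun[OF fin(2)]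
      chromatic_symfun_disjoint_union[OF fin disj noE]
    unfolding irreducible_Lambda_def V by blast
qed

theorem mainTheorem5:
  fixes V :: "'a set" and E :: "'a \<Rightarrow> 'a \<Rightarrow> bool"
  assumes "forest V E" and "V \<noteq> {}"
  shows "tree V E \<longleftrightarrow> irreducible_Lambda (chromatic_symfun V E)"
proof
  have sg: "simple_graph V E" using assms(1) by (simp add: forest_def)
  then have fin: "finite V" and irrefl: "\<forall>v. \<not> E v v" by (auto simp: simple_graph_def)
  show "irreducible_Lambda (chromatic_symfun V E)" if "tree V E"
  proof (rule irreducible_Lambda_if_principal_spec)
    show "sym_fun (chromatic_symfun V E)" using fin by (rule sym_fun_chromatic_symfun)
    show "homogeneous (chromatic_symfun V E) (card V)" using fin by (rule homogeneous_chromatic_symfun)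
    show "card V \<noteq> 0" using fin assms(2) by simp
    show "\<not> series_const (chromatic_symfun V E)" using fin assms(2) irrefl by (rule chromatic_symfun_nonconst)
    show "principal_spec (chromatic_symfun V E) N D = of_nat (N * (N - 1) ^ (card V - 1))"
      if "card V \<le> D" for N D
      using principal_spec_chromatic_symfun[OF fin that] card_proper_colorings_tree[OF \<open>tree V E\<close> assms(2)]
      by simp
  qed
  show "tree V E" if "irreducible_Lambda (chromatic_symfun V E)"
    using that assms(1) not_irreducible_chromatic_symfun_if_disconnected[OF sg]
    by (auto simp: tree_def)
qed

end
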